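(* Let $X$ be a Banach space, and let $A$ and $B$ be closed, densely defined linear operators on $X$ generating strongly continuous semigroups $(T(t))_{t\ge0}$ and $(S(t))_{t\ge0}$, respectively. Assume that the closure $\overline{A+B}$ of $A+B$ satisfies $D(A)\cap D(B)\subset D(\overline{A+B})$ and generates a strongly continuous semigroup $(U(t))_{t\ge0}$. Let $\Theta\in(0,1)$ and assume the stability condition: there exist constants $M_4\ge1$, $\omega_4\in\mathbb{R}$ such that for all $t\ge0$ and $n\in\mathbb{N}$ $$\|[\Theta S(t/n)T(t/n)+(1-\Theta)T(t/n)S(t/n)]^n\|\le M_4e^{\omega_4 t}\quad\text{and}\quad \|[\Theta T(t/n)S(t/n)+(1-\Theta)S(t/n)T(t/n)]^n\|\le M_4e^{\omega_4 t}.$$ Then the weighted splitting is convergent at every fixed time level $t>0$, i.e. $$\lim_{n\to\infty}\big\|[\Theta S(t/n)T(t/n)+(1-\Theta)T(t/n)S(t/n)]^n x-U(t)x\big\|=0\quad\text{for all }x\in X.$$ *)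

theory Defs
  imports "HOL-Analysis.Analysis"
begin

text \<open>Unbounded linear operators on a Banach space are represented by a pair
  (domain D, map A); only the values of A on D matter.\<close>

definition op_graph :: "'a set \<Rightarrow> ('a \<Rightarrow> 'b) \<Rightarrow> ('a \<times> 'b) set" where
  "op_graph D A = {(x, A x) | x. x \<in> D}"

definition linear_operator :: "'a::real_vector set \<Rightarrow> ('a \<Rightarrow> 'a) \<Rightarrow> bool" where
  "linear_operator D A \<longleftrightarrow> subspace D \<and>
     (\<forall>x\<in>D. \<forall>y\<in>D. \<forall>c::real. A (x + y) = A x + A y \<and> A (c *\<^sub>R x) = c *\<^sub>R A x)"

definition closed_operator :: "'a::real_normed_vector set \<Rightarrow> ('a \<Rightarrow> 'a) \<Rightarrow> bool" where
  "closed_operator D A \<longleftrightarrow> linear_operator D A \<and> closed (op_graph D A)"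

definition densely_defined :: "'a::real_normed_vector set \<Rightarrow> bool" where
  "densely_defined D \<longleftrightarrow> closure D = UNIV"

definition C0_semigroup :: "(real \<Rightarrow> ('a::real_normed_vector \<Rightarrow>\<^sub>L 'a)) \<Rightarrow> bool" where
  "C0_semigroup T \<longleftrightarrow> T 0 = id_blinfun \<and>
     (\<forall>s\<ge>0. \<forall>t\<ge>0. T (s + t) = T s o\<^sub>L T t) \<and>
     (\<forall>x. continuous_on {0..} (\<lambda>t. blinfun_apply (T t) x))"

definition generates :: "'a::real_normed_vector set \<Rightarrow> ('a \<Rightarrow> 'a) \<Rightarrow> (real \<Rightarrow> ('a \<Rightarrow>\<^sub>L 'a)) \<Rightarrow> bool" where
  "generates D A T \<longleftrightarrow> C0_semigroup T \<and>
     D = {x. \<exists>y. ((\<lambda>h. (1 / h) *\<^sub>R (T h x - x)) \<longlongrightarrow> y) (at_right 0)} \<and>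
     (\<forall>x\<in>D. ((\<lambda>h. (1 / h) *\<^sub>R (T h x - x)) \<longlongrightarrow> A x) (at_right 0))"

primrec bl_pow :: "('a::real_normed_vector \<Rightarrow>\<^sub>L 'a) \<Rightarrow> nat \<Rightarrow> ('a \<Rightarrow>\<^sub>L 'a)" where
  "bl_pow L 0 = id_blinfun"
| "bl_pow L (Suc n) = L o\<^sub>L bl_pow L n"

end

theory Submission
  imports Defs
begin

text \<open>
  The weighted splitting \<open>F(h) = \<Theta> S(h)T(h) + (1 - \<Theta>) T(h)S(h)\<close> converges,
  \<open>F(t/n)^n x \<longrightarrow> U(t) x\<close>, by Chernoff's product formula: if a family \<open>F(h)\<close> of
  bounded operators is stable, \<open>\<parallel>F(h)^k\<parallel> \<le> M exp(W k h)\<close>, and consistent on a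
  core with the generator \<open>G\<close> of \<open>U\<close>, \<open>(F(h) z - z)/h \<longrightarrow> G z\<close>, then
  \<open>F(t/n)^n x \<longrightarrow> U(t) x\<close> for every \<open>x\<close>.

  Chernoff's formula is then proved in the locale \<open>chernoff\<close>: with
  \<open>h = t/n\<close>, \<open>P = F(h)\<close> and \<open>\<mu> = W + 1\<close>, the discrete resolvent
  \<open>R = h \<Sum>k. exp(-\<mu>(k+1)h) P^k = h (exp(\<mu>h) - P)\<inverse>\<close> is bounded uniformly in \<open>n\<close>,
  and its defect \<open>R(\<mu> - G)z - z\<close> tends to \<open>0\<close> on the domain, uniformly along
  orbits.  A telescoping sum (Lady Windermere's fan) gives \<open>R (P^n - U(t)) z \<longrightarrow> 0\<close>;
  removing \<open>R\<close> on the domain and using stability and density yields the formula.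
  Finally the weighted splitting is shown to be stable and consistent with the
  closure of \<open>A + B\<close> on the core \<open>D(A) \<inter> D(B)\<close>, which proves the theorem.
\<close>

lemma blinfun_compose_assoc: "(a o\<^sub>L b) o\<^sub>L c = a o\<^sub>L (b o\<^sub>L c)"
  by (rule blinfun_eqI) simp

lemma bl_pow_Suc': "bl_pow L (Suc n) = bl_pow L n o\<^sub>L L"
proof (induction n)
  case 0
  then show ?case by (auto intro!: blinfun_eqI)
next
  case (Suc n)
  have "bl_pow L (Suc (Suc n)) = L o\<^sub>L (bl_pow L n o\<^sub>L L)" using Suc by simp
  also have "\<dots> = bl_pow L (Suc n) o\<^sub>L L" by (simp add: blinfun_compose_assoc)
  finally show ?case .
qed

lemma bl_pow_apply_commute: "bl_pow L k (L x) = L (bl_pow L k x)"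
  using bl_pow_Suc'[of L k] by (metis bl_pow.simps(2) blinfun_apply_blinfun_compose)

lemma bl_pow_commute:
  assumes "Q o\<^sub>L L = L o\<^sub>L Q"
  shows "Q o\<^sub>L bl_pow L n = bl_pow L n o\<^sub>L Q"
proof (induction n)
  case 0
  then show ?case by (simp add: blinfun_eqI)
next
  case (Suc n)
  have "Q o\<^sub>L bl_pow L (Suc n) = (Q o\<^sub>L L) o\<^sub>L bl_pow L n" by (simp add: blinfun_compose_assoc)
  also have "\<dots> = L o\<^sub>L (Q o\<^sub>L bl_pow L n)" using assms by (simp add: blinfun_compose_assoc)
  also have "\<dots> = bl_pow L (Suc n) o\<^sub>L Q" using Suc by (simp add: blinfun_compose_assoc)
  finally show ?case .
qed

lemma norm_bl_pow_0_le: "norm (bl_pow L 0) \<le> 1"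
  by (simp, rule norm_blinfun_bound) auto

text \<open>A bounded linear operator bounded by \<open>k\<close> on a ball of radius \<open>r\<close> has norm at
  most \<open>4k/r\<close> (it is bounded by \<open>2k\<close> on the sphere of radius \<open>r/2\<close> about \<open>0\<close>).\<close>

lemma norm_bound_from_ball:
  fixes L :: "'a::real_normed_vector \<Rightarrow>\<^sub>L 'b::real_normed_vector"
  assumes r: "r > 0" and bounded: "\<And>y. y \<in> ball x0 r \<Longrightarrow> norm (L y) \<le> k"
  shows "norm L \<le> 4 * k / r"
proof (rule norm_blinfun_bound)
  have "k \<ge> 0" using bounded[of x0] r by (smt (verit) centre_in_ball norm_ge_zero)
  then show "0 \<le> 4 * k / r" using r by simp
  fix y :: 'a
  show "norm (L y) \<le> 4 * k / r * norm y"
  proof (cases "y = 0")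
    case True
    then show ?thesis by simp
  next
    case False
    define z where "z = (r / 2 / norm y) *\<^sub>R y"
    have "norm z = r / 2" using False r by (simp add: z_def)
    then have "norm (L (x0 + z)) \<le> k" "norm (L x0) \<le> k"
      using r by (auto intro!: bounded simp: dist_norm)
    then have "norm (L z) \<le> 2 * k"
      using norm_triangle_ineq4[of "L (x0 + z)" "L x0"] by (simp add: blinfun.add_right)
    moreover have "L y = (2 * norm y / r) *\<^sub>R L z"
      using False r by (simp add: z_def blinfun.scaleR_right)
    moreover have "0 \<le> 2 * norm y / r" using r by simp
    ultimately have "norm (L y) \<le> (2 * norm y / r) * (2 * k)"
      by (metis mult_left_mono norm_scaleR abs_of_nonneg)
    then show ?thesis by (simp add: field_simps)
  qed
qed

text \<open>The uniform boundedness principle (Banach--Steinhaus): a pointwise bounded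
  family of bounded operators on a Banach space is norm bounded, because by the
  Baire category theorem the family is uniformly bounded on some ball.\<close>

lemma uniform_boundedness:
  fixes L :: "'i \<Rightarrow> ('a::banach \<Rightarrow>\<^sub>L 'b::real_normed_vector)"
  assumes pointwise: "\<And>x. \<exists>B. \<forall>i\<in>I. norm (L i x) \<le> B"
  shows "\<exists>K. \<forall>i\<in>I. norm (L i) \<le> K"
proof -
  define E where "E k = {x. \<forall>i\<in>I. norm (L i x) \<le> real k}" for k :: nat
  have closed_E: "closed (E k)" for k
  proof -
    have "E k = (\<Inter>i\<in>I. {x. norm (L i x) \<le> real k})" unfolding E_def by auto
    moreover have "closed {x. norm (L i x) \<le> real k}" for i
      by (intro closed_Collect_le continuous_intros)
    ultimately show ?thesis by auto
  qed
  have cover: "(\<Union>k. E k) = UNIV"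
  proof -
    have "x \<in> (\<Union>k. E k)" for x
    proof -
      obtain B where "\<forall>i\<in>I. norm (L i x) \<le> B" using pointwise by blast
      moreover obtain k :: nat where "B \<le> real k" using real_arch_simple by blast
      ultimately have "x \<in> E k" unfolding E_def by force
      then show ?thesis by blast
    qed
    then show ?thesis by blast
  qed
  have "\<exists>k. interior (E k) \<noteq> {}"
  proof (rule ccontr)
    assume "\<nexists>k. interior (E k) \<noteq> {}"
    then have "euclidean interior_of \<Union>(range E) = {}"
      by (intro Baire_category_alt) (auto simp: completely_metrizable_space_euclidean closed_E)
    then show False using cover by simp
  qed
  then obtain k x0 where "x0 \<in> interior (E k)" by blast
  then obtain r where r: "r > 0" "ball x0 r \<subseteq> E k"
    using open_contains_ball by (meson interior_subset open_interior subset_trans)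
  have "norm (L i) \<le> 4 * real k / r" if "i \<in> I" for i
    using r that by (intro norm_bound_from_ball) (auto simp: E_def)
  then show ?thesis by blast
qed

lemma average_integral_tendsto:
  fixes f :: "real \<Rightarrow> 'a::banach"
  assumes cont: "continuous_on {a..b} f" and ab: "a < b"
  shows "((\<lambda>h. (1/h) *\<^sub>R integral {a..a+h} f) \<longlongrightarrow> f a) (at_right 0)"
proof (rule tendstoI)
  fix e :: real assume e: "e > 0"
  obtain d where d: "d > 0" "\<forall>x'\<in>{a..b}. dist x' a < d \<longrightarrow> dist (f x') (f a) < e/2"
    using cont ab e unfolding continuous_on_iff
    by (metis atLeastAtMost_iff half_gt_zero less_eq_real_def order_refl)
  have "dist ((1/h) *\<^sub>R integral {a..a+h} f) (f a) < e" if h: "h > 0" "h < min d (b-a)" for h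
  proof -
    have ci: "continuous_on {a..a+h} f" using cont h by (auto intro: continuous_on_subset)
    have "integral {a..a+h} (\<lambda>s. f s - f a) = integral {a..a+h} f - h *\<^sub>R f a"
      using h by (subst integral_diff) (auto intro!: integrable_continuous_real ci)
    moreover have "norm (integral {a..a+h} (\<lambda>s. f s - f a)) \<le> e/2 * (a + h - a)"
    proof (rule integral_bound)
      show "a \<le> a + h" using h by simp
      show "continuous_on {a..a+h} (\<lambda>s. f s - f a)" by (intro continuous_intros ci)
      fix s assume "s \<in> {a..a+h}"
      then have "s \<in> {a..b}" "dist s a < d" using h by (auto simp: dist_real_def)
      then show "norm (f s - f a) \<le> e/2" using d by (auto simp: dist_norm intro: less_imp_le)
    qed
    ultimately have "norm (integral {a..a+h} f - h *\<^sub>R f a) \<le> e/2 * h" by simp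
    moreover have "(1/h) *\<^sub>R integral {a..a+h} f - f a = (1/h) *\<^sub>R (integral {a..a+h} f - h *\<^sub>R f a)"
      using h by (simp add: algebra_simps)
    ultimately have "dist ((1/h) *\<^sub>R integral {a..a+h} f) (f a) \<le> e/2"
      using h by (simp add: dist_norm divide_le_eq mult.commute)
    then show ?thesis using e by simp
  qed
  then show "\<forall>\<^sub>F h in at_right 0. dist ((1/h) *\<^sub>R integral {a..a+h} f) (f a) < e"
    unfolding eventually_at_right_field using d ab by (intro exI[of _ "min d (b-a)"]) auto
qed

lemma uniform_tendsto_on_compact:
  fixes \<Psi> :: "nat \<Rightarrow> real \<Rightarrow> 'b::real_normed_vector" and u v :: "real \<Rightarrow> 'a::real_normed_vector"
  assumes K: "compact K" and cont_u: "continuous_on K u" and cont_v: "continuous_on K v"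
    and L: "L \<ge> 0"
    and lipschitz: "\<And>n s s'. n \<ge> 1 \<Longrightarrow> s \<in> K \<Longrightarrow> s' \<in> K \<Longrightarrow>
        norm (\<Psi> n s - \<Psi> n s') \<le> L * (norm (u s - u s') + norm (v s - v s'))"
    and pointwise: "\<And>s. s \<in> K \<Longrightarrow> (\<lambda>n. \<Psi> n s) \<longlonglongrightarrow> 0"
    and e: "e > 0"
  shows "\<forall>\<^sub>F n in sequentially. \<forall>s\<in>K. norm (\<Psi> n s) < e"
proof -
  define e' where "e' = e / (4 * (L + 1))"
  have e': "e' > 0" and small: "L * (2 * e') < e / 2" using e L by (simp_all add: e'_def field_simps)
  obtain d where d: "d > 0" "\<And>s s'. s \<in> K \<Longrightarrow> s' \<in> K \<Longrightarrow> dist s' s < d \<Longrightarrow>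
      dist (u s') (u s) < e' \<and> dist (v s') (v s) < e'"
  proof -
    obtain d1 where "d1 > 0" "\<forall>s\<in>K. \<forall>s'\<in>K. dist s' s < d1 \<longrightarrow> dist (u s') (u s) < e'"
      using compact_uniformly_continuous[OF cont_u K] e' unfolding uniformly_continuous_on_def by metis
    moreover obtain d2 where "d2 > 0" "\<forall>s\<in>K. \<forall>s'\<in>K. dist s' s < d2 \<longrightarrow> dist (v s') (v s) < e'"
      using compact_uniformly_continuous[OF cont_v K] e' unfolding uniformly_continuous_on_def by metis
    ultimately show thesis by (intro that[of "min d1 d2"]) auto
  qed
  have "K \<subseteq> (\<Union>s\<in>K. ball s d)" using d(1) by auto
  then obtain K' where K': "K' \<subseteq> K" "finite K'" "K \<subseteq> (\<Union>s\<in>K'. ball s d)"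
    using compactE_image[OF K, of K "\<lambda>s. ball s d"] by auto
  have "\<forall>\<^sub>F n in sequentially. \<forall>s\<in>K'. norm (\<Psi> n s) < e/2"
  proof (intro eventually_ball_finite ballI)
    show "finite K'" by fact
    fix s assume "s \<in> K'"
    then have "(\<lambda>n. \<Psi> n s) \<longlonglongrightarrow> 0" using pointwise K' by auto
    from tendstoD[OF this, of "e/2"] show "\<forall>\<^sub>F n in sequentially. norm (\<Psi> n s) < e/2"
      using e by (simp add: dist_norm)
  qed
  moreover have "\<forall>\<^sub>F n in sequentially. n \<ge> 1" by (rule eventually_ge_at_top)
  ultimately show ?thesis
  proof eventually_elim
    case (elim n)
    show ?case
    proof
      fix s assume s: "s \<in> K"
      then obtain s0 where s0: "s0 \<in> K'" "dist s s0 < d" using K' by (auto simp: dist_commute)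
      then have "dist (u s) (u s0) < e'" "dist (v s) (v s0) < e'"
        using d(2)[of s0 s] s K' by auto
      then have "norm (\<Psi> n s - \<Psi> n s0) \<le> L * (2 * e')"
        using lipschitz[of n s s0] elim s s0 K' L
        by (smt (verit, best) dist_norm mult_left_mono subsetD)
      then have "norm (\<Psi> n s - \<Psi> n s0) < e/2" using small by linarith
      moreover have "norm (\<Psi> n s0) < e/2" using elim s0 by auto
      ultimately show "norm (\<Psi> n s) < e"
        using norm_triangle_ineq[of "\<Psi> n s - \<Psi> n s0" "\<Psi> n s0"] by simp
    qed
  qed
qed

lemma tendsto_zero_dense:
  fixes L :: "nat \<Rightarrow> ('a::real_normed_vector \<Rightarrow>\<^sub>L 'b::real_normed_vector)"
  assumes bound: "\<And>n. n \<ge> 1 \<Longrightarrow> norm (L n) \<le> K"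
    and on_dense: "\<And>z. z \<in> D \<Longrightarrow> (\<lambda>n. L n z) \<longlonglongrightarrow> 0"
    and dense: "closure D = UNIV"
  shows "(\<lambda>n. L n x) \<longlonglongrightarrow> 0"
proof (rule tendstoI)
  fix e :: real assume e: "e > 0"
  have K0: "K \<ge> 0" using bound[of 1] norm_ge_zero order_trans by blast
  have "x \<in> closure D" using dense by simp
  moreover have "e / (2 * (K + 1)) > 0" using e K0 by simp
  ultimately obtain z where z: "z \<in> D" "dist z x < e / (2 * (K + 1))"
    unfolding closure_approachable by blast
  have "\<forall>\<^sub>F n in sequentially. norm (L n z) < e/2"
    using tendstoD[OF on_dense[OF z(1)], of "e/2"] e by (simp add: dist_norm)
  moreover have "\<forall>\<^sub>F n in sequentially. n \<ge> 1" by (rule eventually_ge_at_top)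
  ultimately show "\<forall>\<^sub>F n in sequentially. dist (L n x) 0 < e"
  proof eventually_elim
    case (elim n)
    have "norm (L n x - L n z) = norm (L n (x - z))" by (simp add: blinfun.diff_right)
    also have "\<dots> \<le> K * norm (x - z)"
      using bound[OF elim(2)] norm_blinfun[of "L n" "x - z"]
      by (meson mult_right_mono norm_ge_zero order_trans)
    also have "\<dots> \<le> K * (e / (2 * (K + 1)))"
      using z(2) K0 by (intro mult_left_mono) (auto simp: dist_norm norm_minus_commute)
    also have "\<dots> \<le> e/2" using K0 e by (simp add: field_simps)
    finally show ?case using elim(1) norm_triangle_ineq[of "L n x - L n z" "L n z"] by simp
  qed
qed

lemma exp_difference_quotient_tendsto:
  fixes h :: "nat \<Rightarrow> real"
  assumes "h \<longlonglongrightarrow> 0" "\<And>n. n \<ge> 1 \<Longrightarrow> h n \<noteq> 0"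
  shows "(\<lambda>n. (exp (\<mu> * h n) - 1) / h n) \<longlonglongrightarrow> \<mu>"
proof -
  have "((\<lambda>x. exp (\<mu> * x)) has_field_derivative exp (\<mu> * 0) * \<mu>) (at 0)"
    by (auto intro!: derivative_eq_intros)
  then have "((\<lambda>y. (exp (\<mu> * y) - 1) / y) \<longlongrightarrow> \<mu>) (at 0)"
    unfolding has_field_derivative_iff by simp
  moreover have "filterlim h (at 0) sequentially"
    using assms by (intro filterlim_atI) (auto simp: eventually_sequentially)
  ultimately show ?thesis by (rule filterlim_compose[unfolded o_def])
qed

lemma tendsto_const_over_n_at_right:
  "t > 0 \<Longrightarrow> filterlim (\<lambda>n::nat. t / real n) (at_right 0) sequentially"
  by (rule filterlim_at_withinI[OF lim_const_over_n])
     (auto simp: eventually_sequentially intro!: exI[of _ 1])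

subsection \<open>Generators of \<open>C\<^sub>0\<close>-semigroups\<close>

locale semigroup_generator =
  fixes D :: "'a::banach set" and G :: "'a \<Rightarrow> 'a" and U :: "real \<Rightarrow> ('a \<Rightarrow>\<^sub>L 'a)"
  assumes generates: "generates D G U"
begin

lemma semigroup_zero: "U 0 = id_blinfun"
  using generates unfolding generates_def C0_semigroup_def by auto

lemma semigroup_apply: "s \<ge> 0 \<Longrightarrow> t \<ge> 0 \<Longrightarrow> U (s + t) x = U s (U t x)"
  using generates unfolding generates_def C0_semigroup_def by auto

lemma semigroup_commute: "s \<ge> 0 \<Longrightarrow> t \<ge> 0 \<Longrightarrow> U s (U t x) = U t (U s x)"
  by (metis semigroup_apply add.commute)

lemma orbit_continuous_on: "0 \<le> a \<Longrightarrow> continuous_on {a..b} (\<lambda>s. U s x)"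
  using generates unfolding generates_def C0_semigroup_def
  by (auto intro: continuous_on_subset)

lemma domain_iff: "x \<in> D \<longleftrightarrow> (\<exists>y. ((\<lambda>h. (1 / h) *\<^sub>R (U h x - x)) \<longlongrightarrow> y) (at_right 0))"
  using generates unfolding generates_def by auto

lemma generator_limit: "x \<in> D \<Longrightarrow> ((\<lambda>h. (1 / h) *\<^sub>R (U h x - x)) \<longlongrightarrow> G x) (at_right 0)"
  using generates unfolding generates_def by auto

lemma strongly_continuous_at_0: "((\<lambda>h. U h y) \<longlongrightarrow> y) (at_right 0)"
proof -
  have "((\<lambda>h. U h y) \<longlongrightarrow> U 0 y) (at 0 within {0..1})"
    using orbit_continuous_on[of 0 1 y] unfolding continuous_on_def by auto
  then have "((\<lambda>h. U h y) \<longlongrightarrow> U 0 y) (at_right 0)"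
    by (simp add: at_within_Icc_at_right)
  then show ?thesis by (simp add: semigroup_zero)
qed

lemma domain_invariant:
  assumes x: "x \<in> D" and s: "s \<ge> 0"
  shows "U s x \<in> D" "G (U s x) = U s (G x)"
proof -
  have shift: "\<forall>\<^sub>F h in at_right 0.
      U s ((1 / h) *\<^sub>R (U h x - x)) = (1 / h) *\<^sub>R (U h (U s x) - U s x)"
    unfolding eventually_at_right_field using s
    by (intro exI[of _ 1]) (auto simp: semigroup_commute blinfun.diff_right blinfun.scaleR_right)
  have "((\<lambda>h. U s ((1 / h) *\<^sub>R (U h x - x))) \<longlongrightarrow> U s (G x)) (at_right 0)"
    by (intro blinfun.tendsto[OF tendsto_const] generator_limit x)
  then have lim: "((\<lambda>h. (1 / h) *\<^sub>R (U h (U s x) - U s x)) \<longlongrightarrow> U s (G x)) (at_right 0)"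
    by (rule Lim_transform_eventually[OF _ shift])
  then show "U s x \<in> D" by (subst domain_iff) blast
  then show "G (U s x) = U s (G x)"
    using generator_limit lim tendsto_unique trivial_limit_at_right_real by blast
qed

lemma locally_bounded: "\<exists>K. \<forall>s\<in>{0..b}. norm (U s) \<le> K"
proof (rule uniform_boundedness)
  fix x
  have "compact ((\<lambda>s. U s x) ` {0..b})"
    by (intro compact_continuous_image orbit_continuous_on) auto
  then obtain B where "\<forall>y\<in>(\<lambda>s. U s x) ` {0..b}. norm y \<le> B"
    using compact_imp_bounded bounded_iff by metis
  then show "\<exists>B. \<forall>s\<in>{0..b}. norm (U s x) \<le> B" by auto
qed

lemma apply_tendsto_at_0:
  assumes q: "(q \<longlongrightarrow> a) (at_right 0)"
  shows "((\<lambda>h. U h (q h)) \<longlongrightarrow> a) (at_right 0)"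
proof -
  obtain K where K: "\<forall>s\<in>{0..1}. norm (U s) \<le> K" using locally_bounded[of 1] by auto
  have "((\<lambda>h. U h (q h - a)) \<longlongrightarrow> 0) (at_right 0)"
  proof (rule Lim_null_comparison)
    show "\<forall>\<^sub>F h in at_right 0. norm (U h (q h - a)) \<le> K * norm (q h - a)"
      unfolding eventually_at_right_field
    proof (intro exI[of _ 1] conjI allI impI)
      fix h :: real assume "0 < h" "h < 1"
      then show "norm (U h (q h - a)) \<le> K * norm (q h - a)"
        using K norm_blinfun[of "U h" "q h - a"]
        by (meson atLeastAtMost_iff less_imp_le mult_right_mono norm_ge_zero order_trans)
    qed simp
    have "((\<lambda>h. q h - a) \<longlongrightarrow> 0) (at_right 0)" using q by (rule LIM_zero)
    then show "((\<lambda>h. K * norm (q h - a)) \<longlongrightarrow> 0) (at_right 0)"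
      by (intro tendsto_mult_right_zero) (simp add: tendsto_norm_zero_iff)
  qed
  then have "((\<lambda>h. U h (q h - a) + U h a) \<longlongrightarrow> 0 + a) (at_right 0)"
    by (intro tendsto_intros strongly_continuous_at_0)
  then show ?thesis by (simp add: blinfun.bilinear_simps)
qed

lemma orbit_integral_increment:
  fixes x :: 'a
  assumes h: "0 < h" "h < \<tau>"
  defines "f \<equiv> \<lambda>s. U s x"
  shows "U h (integral {0..\<tau>} f) - integral {0..\<tau>} f = integral {\<tau>..\<tau>+h} f - integral {0..h} f"
proof -
  have cont: "continuous_on {a..b} f" if "0 \<le> a" for a b
    using orbit_continuous_on that unfolding f_def by blast
  have "U h (integral {0..\<tau>} f) = integral {0..\<tau>} (\<lambda>s. U h (f s))"
    by (rule integral_blinfun_apply[symmetric]) (intro integrable_continuous_real cont, simp)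
  also have "\<dots> = integral {0..\<tau>} (\<lambda>s. f (s + h))"
    unfolding f_def using h by (intro integral_cong) (simp add: semigroup_apply[symmetric] add.commute)
  also have "\<dots> = integral {h..\<tau>+h} f"
    using integral_shift_real_ivl[where f=f and a=h and b="\<tau>+h" and c=h] by simp
  finally have translate: "U h (integral {0..\<tau>} f) = integral {h..\<tau>+h} f" .
  have split1: "integral {0..h} f + integral {h..\<tau>} f = integral {0..\<tau>} f"
    using h by (intro Henstock_Kurzweil_Integration.integral_combine integrable_continuous_real cont; simp)
  have split2: "integral {h..\<tau>} f + integral {\<tau>..\<tau>+h} f = integral {h..\<tau>+h} f"
    using h by (intro Henstock_Kurzweil_Integration.integral_combine integrable_continuous_real cont; simp)
  have "U h (integral {0..\<tau>} f) - integral {0..\<tau>} f = integral {h..\<tau>+h} f - integral {0..\<tau>} f"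
    using translate by simp
  also have "\<dots> = integral {\<tau>..\<tau>+h} f - integral {0..h} f"
    by (simp only: split1[symmetric] split2[symmetric]) (simp add: algebra_simps)
  finally show ?thesis .
qed

text \<open>Hence the averages \<open>(1/\<tau>) \<integral>\<^sub>0\<^sup>\<tau> U(s) x ds\<close> lie in the domain; as they tend to \<open>x\<close>
  for \<open>\<tau> \<rightarrow> 0\<close>, the domain is dense.\<close>

lemma average_in_domain:
  assumes \<tau>: "\<tau> > 0"
  shows "(1/\<tau>) *\<^sub>R integral {0..\<tau>} (\<lambda>s. U s x) \<in> D"
proof -
  define f where "f s = U s x" for s
  define v where "v = (1/\<tau>) *\<^sub>R integral {0..\<tau>} f"
  have shift: "\<forall>\<^sub>F h in at_right 0.
      (1/\<tau>) *\<^sub>R ((1/h) *\<^sub>R integral {\<tau>..\<tau>+h} f - (1/h) *\<^sub>R integral {0..0+h} f) =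
      (1 / h) *\<^sub>R (U h v - v)"
    unfolding eventually_at_right_field
  proof (intro exI[of _ \<tau>] conjI allI impI)
    show "\<tau> > 0" by (rule \<tau>)
    fix h :: real assume "0 < h" "h < \<tau>"
    then have "U h v - v = (1/\<tau>) *\<^sub>R (integral {\<tau>..\<tau>+h} f - integral {0..h} f)"
      unfolding v_def blinfun.scaleR_right scaleR_diff_right[symmetric] f_def
      by (simp add: orbit_integral_increment)
    then show "(1/\<tau>) *\<^sub>R ((1/h) *\<^sub>R integral {\<tau>..\<tau>+h} f - (1/h) *\<^sub>R integral {0..0+h} f) =
        (1 / h) *\<^sub>R (U h v - v)"
      by (simp add: scaleR_diff_right mult.commute)
  qed
  have "((\<lambda>h. (1/\<tau>) *\<^sub>R ((1/h) *\<^sub>R integral {\<tau>..\<tau>+h} f - (1/h) *\<^sub>R integral {0..0+h} f))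
         \<longlongrightarrow> (1/\<tau>) *\<^sub>R (f \<tau> - f 0)) (at_right 0)"
    using \<tau> unfolding f_def
    by (intro tendsto_intros average_integral_tendsto[where b="\<tau>+1"]
        average_integral_tendsto[where b=1] orbit_continuous_on) auto
  then have "((\<lambda>h. (1 / h) *\<^sub>R (U h v - v)) \<longlongrightarrow> (1/\<tau>) *\<^sub>R (f \<tau> - f 0)) (at_right 0)"
    by (rule Lim_transform_eventually[OF _ shift])
  then show ?thesis unfolding v_def f_def by (subst domain_iff) blast
qed

lemma domain_dense: "closure D = UNIV"
proof -
  have "x \<in> closure D" for x
  proof -
    define v where "v \<tau> = (1/\<tau>) *\<^sub>R integral {0..\<tau>} (\<lambda>s. U s x)" for \<tau>
    have "(v \<longlongrightarrow> U 0 x) (at_right 0)"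
      unfolding v_def using average_integral_tendsto[of 0 1 "\<lambda>s. U s x"] orbit_continuous_on by simp
    then have "(v \<longlongrightarrow> x) (at_right 0)" by (simp add: semigroup_zero)
    moreover have "\<forall>\<^sub>F \<tau> in at_right 0. v \<tau> \<in> closure D"
      unfolding eventually_at_right_field v_def using average_in_domain closure_subset
      by (intro exI[of _ 1]) auto
    ultimately show ?thesis
      using Lim_in_closed_set[OF closed_closure _ trivial_limit_at_right_real] by blast
  qed
  then show ?thesis by auto
qed

end

subsection \<open>Chernoff's product formula\<close>

locale chernoff = semigroup_generator D G U for D :: "'a::banach set" and G U +
  fixes F :: "real \<Rightarrow> ('a \<Rightarrow>\<^sub>L 'a)" and M W t :: real and Core :: "'a set"
  assumes stable: "\<And>h k. h \<ge> 0 \<Longrightarrow> norm (bl_pow (F h) k) \<le> M * exp (W * real k * h)"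
    and M_ge_1: "M \<ge> 1" and W_nonneg: "W \<ge> 0" and t_pos: "t > 0"
    and core: "\<And>z. z \<in> D \<Longrightarrow>
      \<exists>zs. (\<forall>j. zs j \<in> Core) \<and> zs \<longlonglongrightarrow> z \<and> (\<lambda>j. G (zs j)) \<longlonglongrightarrow> G z"
    and consistent: "\<And>z. z \<in> Core \<Longrightarrow> ((\<lambda>h. (1 / h) *\<^sub>R (F h z - z)) \<longlongrightarrow> G z) (at_right 0)"
begin

text \<open>Step size \<open>h = t/n\<close>, one step \<open>P = F(h)\<close>, and the discrete resolvent
  \<open>R = h \<Sum>k. exp(-\<mu>(k+1)h) P^k = h (exp(\<mu>h) - P)\<inverse>\<close> at the point \<open>\<mu> = W + 1\<close>
  beyond the growth bound \<open>W\<close>.\<close>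

definition "mu = W + 1"
definition "step n = t / real n"
definition "P n = F (step n)"
definition "weight n k = exp (- mu * real (Suc k) * step n)"
definition "R n = step n *\<^sub>R (\<Sum>k. weight n k *\<^sub>R bl_pow (P n) k)"

lemma step_pos: "n \<ge> 1 \<Longrightarrow> step n > 0"
  using t_pos by (simp add: step_def)

lemma step_nonneg: "step n \<ge> 0"
  using t_pos by (simp add: step_def)

lemma step_at_right: "filterlim step (at_right 0) sequentially"
  unfolding step_def using t_pos by (rule tendsto_const_over_n_at_right)

lemma mu_pos: "mu > 0"
  using W_nonneg by (simp add: mu_def)

lemma exp_quotient_tendsto: "(\<lambda>n. (exp (mu * step n) - 1) / step n) \<longlonglongrightarrow> mu"
proof (rule exp_difference_quotient_tendsto[of step])
  show "step \<longlonglongrightarrow> 0" using lim_const_over_n[of t] by (simp add: step_def[abs_def])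
  show "step n \<noteq> 0" if "n \<ge> 1" for n using step_pos[OF that] by simp
qed

lemma power_bound: "norm (bl_pow (P n) k) \<le> M * exp (W * real k * step n)"
  unfolding P_def using stable step_nonneg by blast

lemma power_bound_horizon:
  assumes "n \<ge> 1" "j \<le> n"
  shows "norm (bl_pow (P n) j) \<le> M * exp (W * t)"
proof -
  have "real j * step n \<le> real n * step n" using assms step_nonneg by (intro mult_right_mono) auto
  also have "\<dots> = t" using assms by (simp add: step_def)
  finally have "W * real j * step n \<le> W * t" using W_nonneg by (simp add: mult.assoc mult_left_mono)
  then show ?thesis using power_bound[of n j] M_ge_1 by (smt (verit) exp_le_cancel_iff mult_left_mono)
qed

lemma damped_power_bound:
  assumes "k \<le> m"
  shows "norm (exp (- mu * real m * step n) *\<^sub>R bl_pow (P n) k) \<le> M * exp (- step n) ^ m"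
proof -
  have "norm (exp (- mu * real m * step n) *\<^sub>R bl_pow (P n) k)
      = exp (- mu * real m * step n) * norm (bl_pow (P n) k)"
    by simp
  also have "\<dots> \<le> exp (- mu * real m * step n) * (M * exp (W * real m * step n))"
  proof -
    have "W * real k * step n \<le> W * real m * step n"
      using assms W_nonneg step_nonneg by (intro mult_right_mono mult_left_mono) auto
    then have "M * exp (W * real k * step n) \<le> M * exp (W * real m * step n)"
      using M_ge_1 by (intro mult_left_mono) auto
    then show ?thesis using power_bound[of n k] by (intro mult_left_mono) auto
  qed
  also have "\<dots> = M * exp (real m * (- step n))"
    by (simp add: mu_def algebra_simps flip: exp_add)
  also have "\<dots> = M * exp (- step n) ^ m" by (simp only: exp_of_nat_mult)
  finally show ?thesis .
qed

lemma resolvent_terms_summable: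
  assumes "n \<ge> 1"
  shows "summable (\<lambda>k. norm (weight n k *\<^sub>R bl_pow (P n) k))"
proof (rule summable_comparison_test')
  show "summable (\<lambda>k. M * exp (- step n) ^ Suc k)"
    using step_pos[OF assms] by (simp add: summable_geometric summable_mult)
  show "norm (norm (weight n k *\<^sub>R bl_pow (P n) k)) \<le> M * exp (- step n) ^ Suc k" for k
    using damped_power_bound[of k "Suc k" n] by (simp add: weight_def)
qed

lemma resolvent_norm:
  assumes n: "n \<ge> 1"
  shows "norm (R n) \<le> M"
proof -
  let ?q = "exp (- step n)"
  have q: "?q < 1" "?q > 0" using step_pos[OF n] by auto
  have "norm (\<Sum>k. weight n k *\<^sub>R bl_pow (P n) k) \<le> (\<Sum>k. norm (weight n k *\<^sub>R bl_pow (P n) k))"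
    using summable_norm[OF resolvent_terms_summable[OF n]] .
  also have "\<dots> \<le> (\<Sum>k. M * ?q ^ Suc k)"
    using resolvent_terms_summable[OF n] q damped_power_bound[of _ "Suc _" n]
    by (intro suminf_le) (auto simp: weight_def summable_geometric summable_mult)
  also have "\<dots> = M * ?q / (1 - ?q)"
    using q by (simp add: suminf_mult suminf_geometric summable_geometric)
  finally have series: "norm (\<Sum>k. weight n k *\<^sub>R bl_pow (P n) k) \<le> M * ?q / (1 - ?q)" .
  have "?q * (1 + step n) \<le> ?q * exp (step n)" by (intro mult_left_mono) auto
  also have "\<dots> = 1" by (simp flip: exp_add)
  finally have "step n * ?q \<le> 1 - ?q" by (simp add: algebra_simps)
  then have "step n * ?q / (1 - ?q) \<le> 1" using q by (simp add: divide_le_eq)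
  then have "step n * (M * ?q / (1 - ?q)) \<le> M"
    using mult_left_mono[of _ 1 M] M_ge_1 by (simp add: mult.left_commute times_divide_eq_right[symmetric] del: times_divide_eq_right)
  have "norm (R n) = step n * norm (\<Sum>k. weight n k *\<^sub>R bl_pow (P n) k)"
    using step_nonneg by (simp add: R_def)
  also have "\<dots> \<le> step n * (M * ?q / (1 - ?q))"
    using series step_nonneg by (rule mult_left_mono)
  finally show ?thesis using \<open>step n * (M * ?q / (1 - ?q)) \<le> M\<close> by linarith
qed

lemma resolvent_apply:
  assumes n: "n \<ge> 1"
  shows "summable (\<lambda>k. weight n k *\<^sub>R bl_pow (P n) k x)"
    and "R n x = step n *\<^sub>R (\<Sum>k. weight n k *\<^sub>R bl_pow (P n) k x)"
proof -
  have sum: "summable (\<lambda>k. weight n k *\<^sub>R bl_pow (P n) k)"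
    by (rule summable_norm_cancel[OF resolvent_terms_summable[OF n]])
  show "summable (\<lambda>k. weight n k *\<^sub>R bl_pow (P n) k x)"
    using bounded_linear.summable[OF blinfun.bounded_linear_left sum, of x]
    by (simp add: blinfun.scaleR_left)
  have "(\<Sum>k. weight n k *\<^sub>R bl_pow (P n) k) x = (\<Sum>k. (weight n k *\<^sub>R bl_pow (P n) k) x)"
    by (rule bounded_linear.suminf[OF blinfun.bounded_linear_left sum])
  then show "R n x = step n *\<^sub>R (\<Sum>k. weight n k *\<^sub>R bl_pow (P n) k x)"
    by (simp add: R_def blinfun.scaleR_left)
qed

text \<open>\<open>R\<close> inverts \<open>exp(\<mu>h) - P\<close> up to the factor \<open>h\<close>: the series telescopes.\<close>

lemma resolvent_inverse:
  assumes n: "n \<ge> 1"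
  shows "R n (exp (mu * step n) *\<^sub>R z - P n z) = step n *\<^sub>R z"
proof -
  define g where "g k = exp (- mu * real k * step n) *\<^sub>R bl_pow (P n) k z" for k
  have telescope: "weight n k *\<^sub>R bl_pow (P n) k (exp (mu * step n) *\<^sub>R z - P n z) = g k - g (Suc k)" for k
  proof -
    have "weight n k * exp (mu * step n) = exp (- mu * real k * step n)"
      by (simp add: weight_def flip: exp_add) (simp add: algebra_simps)
    then show ?thesis
      by (simp add: g_def weight_def bl_pow_apply_commute blinfun.diff_right
          blinfun.scaleR_right scaleR_diff_right)
  qed
  have "g \<longlonglongrightarrow> 0"
  proof (rule Lim_null_comparison)
    show "\<forall>\<^sub>F k in sequentially. norm (g k) \<le> M * norm z * exp (- step n) ^ k"
    proof (intro always_eventually allI)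
      fix k
      have "norm (g k) = norm ((exp (- mu * real k * step n) *\<^sub>R bl_pow (P n) k) z)"
        by (simp add: g_def blinfun.scaleR_left)
      also have "\<dots> \<le> norm (exp (- mu * real k * step n) *\<^sub>R bl_pow (P n) k) * norm z"
        by (rule norm_blinfun)
      also have "\<dots> \<le> M * exp (- step n) ^ k * norm z"
        by (intro mult_right_mono damped_power_bound) simp_all
      finally show "norm (g k) \<le> M * norm z * exp (- step n) ^ k" by (simp add: algebra_simps)
    qed
    show "(\<lambda>k. M * norm z * exp (- step n) ^ k) \<longlonglongrightarrow> 0"
      using step_pos[OF n] by (intro tendsto_mult_right_zero LIMSEQ_power_zero) simp
  qed
  then have "(\<lambda>k. g k - g (Suc k)) sums (g 0 - 0)" by (rule telescope_sums')
  then have "(\<lambda>k. weight n k *\<^sub>R bl_pow (P n) k (exp (mu * step n) *\<^sub>R z - P n z)) sums z"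
    by (simp add: telescope g_def)
  then show ?thesis by (simp add: resolvent_apply[OF n] sums_iff)
qed

text \<open>\<open>R\<close> is a power series in \<open>P\<close>, so it commutes with \<open>P\<close> and all its powers.\<close>

lemma resolvent_commute_apply:
  assumes n: "n \<ge> 1"
  shows "P n (R n x) = R n (P n x)"
proof -
  have "P n (\<Sum>k. weight n k *\<^sub>R bl_pow (P n) k x) = (\<Sum>k. P n (weight n k *\<^sub>R bl_pow (P n) k x))"
    by (rule bounded_linear.suminf[OF blinfun.bounded_linear_right resolvent_apply(1)[OF n]])
  then show ?thesis
    by (simp add: resolvent_apply(2)[OF n] blinfun.scaleR_right bl_pow_apply_commute)
qed

lemma resolvent_commute_power:
  assumes n: "n \<ge> 1"
  shows "bl_pow (P n) m (R n x) = R n (bl_pow (P n) m x)"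
proof -
  have "R n o\<^sub>L P n = P n o\<^sub>L R n"
    by (rule blinfun_eqI) (simp add: resolvent_commute_apply[OF n])
  from bl_pow_commute[OF this, of m] show ?thesis
    by (metis blinfun_apply_blinfun_compose)
qed

text \<open>Consistency of the discrete resolvent with the resolvent of \<open>G\<close>: the
  defect \<open>R(\<mu> - G)z - z\<close> (which vanishes for the true resolvent), and the defect
  between \<open>(exp(\<mu>h) - 1)/h - \<mu>\<close> and the difference quotient \<open>(U(h) - 1)/h - G\<close>.\<close>

definition "defect n z = R n (mu *\<^sub>R z - G z) - z"
definition "quotient_defect n y = ((exp (mu * step n) - 1) / step n) *\<^sub>R y - mu *\<^sub>R y
  - ((1 / step n) *\<^sub>R (U (step n) y - y) - G y)"

lemma defect_lipschitz:
  assumes n: "n \<ge> 1"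
  shows "norm (defect n a - defect n b) \<le> M * (mu * norm (a - b) + norm (G a - G b)) + norm (a - b)"
proof -
  have "defect n a - defect n b = R n (mu *\<^sub>R (a - b) - (G a - G b)) - (a - b)"
    by (simp add: defect_def blinfun.bilinear_simps algebra_simps)
  also have "norm \<dots> \<le> norm (R n (mu *\<^sub>R (a - b) - (G a - G b))) + norm (a - b)"
    by (rule norm_triangle_ineq4)
  also have "norm (R n (mu *\<^sub>R (a - b) - (G a - G b))) \<le> M * (mu * norm (a - b) + norm (G a - G b))"
  proof -
    have "norm (R n (mu *\<^sub>R (a - b) - (G a - G b))) \<le> norm (R n) * norm (mu *\<^sub>R (a - b) - (G a - G b))"
      by (rule norm_blinfun)
    also have "\<dots> \<le> M * (mu * norm (a - b) + norm (G a - G b))"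
    proof (rule mult_mono)
      show "norm (R n) \<le> M" by (rule resolvent_norm[OF n])
      show "norm (mu *\<^sub>R (a - b) - (G a - G b)) \<le> mu * norm (a - b) + norm (G a - G b)"
        using norm_triangle_ineq4[of "mu *\<^sub>R (a - b)" "G a - G b"] mu_pos by simp
    qed (use M_ge_1 in auto)
    finally show ?thesis .
  qed
  finally show ?thesis by simp
qed

lemma defect_tendsto_core:
  assumes z: "z \<in> Core"
  shows "(\<lambda>n. defect n z) \<longlonglongrightarrow> 0"
proof (rule Lim_null_comparison)
  let ?g = "\<lambda>n. M * (\<bar>mu - (exp (mu * step n) - 1) / step n\<bar> * norm z + norm ((1 / step n) *\<^sub>R (P n z - z) - G z))"
  show "\<forall>\<^sub>F n in sequentially. norm (defect n z) \<le> ?g n"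
    unfolding eventually_sequentially
  proof (intro exI[of _ 1] allI impI)
    fix n :: nat assume n: "n \<ge> 1"
    have h0: "step n \<noteq> 0" using step_pos[OF n] by simp
    have zR: "z = R n ((1 / step n) *\<^sub>R (exp (mu * step n) *\<^sub>R z - P n z))"
      using resolvent_inverse[OF n, of z] h0 by (simp add: blinfun.scaleR_right)
    have "defect n z = R n (mu *\<^sub>R z - G z - (1 / step n) *\<^sub>R (exp (mu * step n) *\<^sub>R z - P n z))"
      unfolding defect_def by (subst (2) zR) (simp add: blinfun.diff_right)
    also have "mu *\<^sub>R z - G z - (1 / step n) *\<^sub>R (exp (mu * step n) *\<^sub>R z - P n z)
       = (mu - (exp (mu * step n) - 1) / step n) *\<^sub>R z + ((1 / step n) *\<^sub>R (P n z - z) - G z)"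
      using h0 by (simp add: algebra_simps diff_divide_distrib)
    finally have "norm (defect n z) \<le> norm (R n) * norm ((mu - (exp (mu * step n) - 1) / step n) *\<^sub>R z + ((1 / step n) *\<^sub>R (P n z - z) - G z))"
      by (simp add: norm_blinfun)
    also have "\<dots> \<le> M * (\<bar>mu - (exp (mu * step n) - 1) / step n\<bar> * norm z + norm ((1 / step n) *\<^sub>R (P n z - z) - G z))"
      by (intro mult_mono resolvent_norm[OF n] order_trans[OF norm_triangle_ineq]) (use M_ge_1 in auto)
    finally show "norm (defect n z) \<le> ?g n" .
  qed
  have d: "(\<lambda>n. (1 / step n) *\<^sub>R (P n z - z)) \<longlonglongrightarrow> G z"
    using filterlim_compose[OF consistent[OF z] step_at_right] by (simp add: o_def P_def)
  show "?g \<longlonglongrightarrow> 0"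
    by (rule tendsto_eq_intros exp_quotient_tendsto d tendsto_const | simp)+
qed

text \<open>Extension from the core to the whole domain by graph-norm approximation.\<close>

lemma defect_tendsto:
  assumes z: "z \<in> D"
  shows "(\<lambda>n. defect n z) \<longlonglongrightarrow> 0"
proof (rule tendstoI)
  fix e :: real assume e: "e > 0"
  obtain zs where zs: "\<forall>j. zs j \<in> Core" "zs \<longlonglongrightarrow> z" "(\<lambda>j. G (zs j)) \<longlonglongrightarrow> G z"
    using core[OF z] by blast
  have "(\<lambda>j. M * (mu * norm (z - zs j) + norm (G z - G (zs j))) + norm (z - zs j)) \<longlonglongrightarrow>
        M * (mu * norm (z - z) + norm (G z - G z)) + norm (z - z)"
    using zs by (intro tendsto_intros)
  then have "(\<lambda>j. M * (mu * norm (z - zs j) + norm (G z - G (zs j))) + norm (z - zs j)) \<longlonglongrightarrow> 0"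
    by simp
  from tendstoD[OF this, of "e/2"] e obtain j where
    j: "\<bar>M * (mu * norm (z - zs j) + norm (G z - G (zs j))) + norm (z - zs j)\<bar> < e/2"
    by (auto simp: eventually_sequentially dist_real_def)
  have "\<forall>\<^sub>F n in sequentially. norm (defect n (zs j)) < e/2"
    using tendstoD[OF defect_tendsto_core[OF zs(1)[rule_format, of j]], of "e/2"] e by (simp add: dist_norm)
  moreover have "\<forall>\<^sub>F n in sequentially. n \<ge> 1" by (rule eventually_ge_at_top)
  ultimately show "\<forall>\<^sub>F n in sequentially. dist (defect n z) 0 < e"
  proof eventually_elim
    case (elim n)
    have "norm (defect n z - defect n (zs j)) < e/2"
      using defect_lipschitz[OF elim(2), of z "zs j"] j abs_ge_self[of "M * (mu * norm (z - zs j) + norm (G z - G (zs j))) + norm (z - zs j)"]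
      by linarith
    then show ?case using elim(1) norm_triangle_ineq[of "defect n z - defect n (zs j)" "defect n (zs j)"] by simp
  qed
qed

lemma defect_uniform_orbit:
  assumes w: "w \<in> D" and e: "e > 0"
  shows "\<forall>\<^sub>F n in sequentially. \<forall>s\<in>{0..t}. norm (defect n (U s w)) < e"
proof (rule uniform_tendsto_on_compact
    [where u = "\<lambda>s. U s w" and v = "\<lambda>s. U s (G w)" and L = "M * mu + M + 1"])
  show "compact {0..t}" by simp
  show "continuous_on {0..t} (\<lambda>s. U s w)" "continuous_on {0..t} (\<lambda>s. U s (G w))"
    by (auto intro: orbit_continuous_on)
  show "0 \<le> M * mu + M + 1" using M_ge_1 mu_pos by simp
  show "e > 0" by fact
  fix n :: nat and s s' :: real assume n: "1 \<le> n" and s: "s \<in> {0..t}" and s': "s' \<in> {0..t}"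
  have Cs: "G (U s w) = U s (G w)" "G (U s' w) = U s' (G w)" using domain_invariant w s s' by auto
  have "norm (defect n (U s w) - defect n (U s' w)) \<le>
      M * (mu * norm (U s w - U s' w) + norm (U s (G w) - U s' (G w))) + norm (U s w - U s' w)"
    using defect_lipschitz[OF n] Cs by metis
  also have "\<dots> \<le> (M * mu + M + 1) * (norm (U s w - U s' w) + norm (U s (G w) - U s' (G w)))"
    using M_ge_1 mu_pos by (simp add: algebra_simps)
  finally show "norm (defect n (U s w) - defect n (U s' w))
      \<le> (M * mu + M + 1) * (norm (U s w - U s' w) + norm (U s (G w) - U s' (G w)))" .
next
  fix s assume "s \<in> {0..t}"
  then show "(\<lambda>n. defect n (U s w)) \<longlonglongrightarrow> 0" using defect_tendsto domain_invariant w by auto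
qed

lemma quotient_defect_uniform_orbit:
  assumes w: "w \<in> D" and e: "e > 0"
  shows "\<forall>\<^sub>F n in sequentially. \<forall>s\<in>{0..t}. norm (quotient_defect n (U s w)) < e"
proof -
  obtain K where K: "\<forall>s\<in>{0..t}. norm (U s) \<le> K" using locally_bounded by blast
  define \<beta> where "\<beta> n = \<bar>(exp (mu * step n) - 1) / step n - mu\<bar> * (K * norm w)
    + K * norm ((1 / step n) *\<^sub>R (U (step n) w - w) - G w)" for n
  have bound: "norm (quotient_defect n (U s w)) \<le> \<beta> n" if s: "s \<in> {0..t}" for n s
  proof -
    let ?q = "(1 / step n) *\<^sub>R (U (step n) w - w) - G w"
    have "G (U s w) = U s (G w)" "U (step n) (U s w) = U s (U (step n) w)"
      using domain_invariant w s semigroup_commute step_nonneg by auto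
    then have "quotient_defect n (U s w) = ((exp (mu * step n) - 1) / step n - mu) *\<^sub>R U s w - U s ?q"
      unfolding quotient_defect_def by (simp add: blinfun.bilinear_simps algebra_simps)
    also have "norm \<dots> \<le> \<bar>(exp (mu * step n) - 1) / step n - mu\<bar> * norm (U s w) + norm (U s ?q)"
      using norm_triangle_ineq4 by (metis norm_scaleR)
    also have "\<dots> \<le> \<beta> n"
      unfolding \<beta>_def
    proof (intro add_mono mult_left_mono)
      show "norm (U s w) \<le> K * norm w" "norm (U s ?q) \<le> K * norm ?q"
        using K s norm_blinfun by (meson mult_right_mono norm_ge_zero order_trans)+
    qed simp
    finally show ?thesis .
  qed
  have "(\<lambda>n. (1 / step n) *\<^sub>R (U (step n) w - w)) \<longlonglongrightarrow> G w"
    using filterlim_compose[OF generator_limit[OF w] step_at_right] by (simp add: o_def)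
  then have "\<beta> \<longlonglongrightarrow> \<bar>mu - mu\<bar> * (K * norm w) + K * norm (G w - G w)"
    unfolding \<beta>_def by (intro tendsto_intros exp_quotient_tendsto)
  then have "\<forall>\<^sub>F n in sequentially. \<beta> n < e"
    using e by (simp add: order_tendstoD(2))
  then show ?thesis
    by eventually_elim (use bound in \<open>fastforce intro: le_less_trans\<close>)
qed

lemma local_error_identity:
  assumes n: "n \<ge> 1"
  shows "R n (P n y - U (step n) y) = step n *\<^sub>R (defect n y + R n (quotient_defect n y))"
proof -
  define e where "e = exp (mu * step n)"
  define h where "h = step n"
  have h0: "h \<noteq> 0" using step_pos[OF n] by (simp add: h_def)
  have r: "R n (P n y) = e *\<^sub>R R n y - h *\<^sub>R y"
    using resolvent_inverse[OF n, of y] by (simp add: e_def h_def blinfun.bilinear_simps algebra_simps)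
  have "step n *\<^sub>R (defect n y + R n (quotient_defect n y)) =
     h *\<^sub>R (mu *\<^sub>R R n y - R n (G y) - y + (((e - 1) / h) *\<^sub>R R n y - mu *\<^sub>R R n y
       - ((1 / h) *\<^sub>R (R n (U h y) - R n y) - R n (G y))))"
    by (simp add: defect_def quotient_defect_def e_def h_def blinfun.bilinear_simps)
  also have "\<dots> = e *\<^sub>R R n y - h *\<^sub>R y - R n (U h y)"
    using h0 by (simp add: algebra_simps diff_divide_distrib)
  also have "\<dots> = R n (P n y - U (step n) y)"
    by (simp add: r h_def blinfun.bilinear_simps)
  finally show ?thesis by simp
qed

text \<open>Lady Windermere's fan: the (smoothed) global error telescopes into the local
  errors at the points \<open>U(kh) z\<close>, each propagated by \<open>n - 1 - k\<close> further steps.\<close>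

lemma telescoping_identity:
  assumes n: "n \<ge> 1"
  shows "R n (bl_pow (P n) n z - U t z) = (\<Sum>k<n. bl_pow (P n) (n - 1 - k)
      (R n (P n (U (real k * step n) z) - U (step n) (U (real k * step n) z))))"
proof -
  define y where "y k = U (real k * step n) z" for k
  define g where "g k = bl_pow (P n) (n - k) (R n (y k))" for k
  have difference: "g k - g (Suc k) = bl_pow (P n) (n - 1 - k) (R n (P n (y k) - U (step n) (y k)))"
    if k: "k < n" for k
  proof -
    have nk: "n - k = Suc (n - 1 - k)" "n - Suc k = n - 1 - k" using k by auto
    have ys: "y (Suc k) = U (step n) (y k)"
      unfolding y_def using step_nonneg by (simp add: semigroup_apply[symmetric] algebra_simps)
    have "g k = bl_pow (P n) (n - 1 - k) (R n (P n (y k)))"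
      unfolding g_def nk by (simp add: bl_pow_apply_commute[symmetric] resolvent_commute_apply[OF n])
    moreover have "g (Suc k) = bl_pow (P n) (n - 1 - k) (R n (U (step n) (y k)))"
      unfolding g_def nk ys ..
    ultimately show ?thesis by (simp add: blinfun.bilinear_simps)
  qed
  have "(\<Sum>k<n. g k - g (Suc k)) = g 0 - g n" by (rule sum_lessThan_telescope')
  moreover have "g 0 = R n (bl_pow (P n) n z)"
    unfolding g_def y_def by (simp add: semigroup_zero resolvent_commute_power[OF n])
  moreover have "g n = R n (U t z)"
    unfolding g_def y_def using n by (simp add: step_def)
  ultimately have "R n (bl_pow (P n) n z - U t z) = (\<Sum>k<n. g k - g (Suc k))"
    by (simp add: blinfun.bilinear_simps)
  also have "\<dots> = (\<Sum>k<n. bl_pow (P n) (n - 1 - k) (R n (P n (y k) - U (step n) (y k))))"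
    by (rule sum.cong) (auto simp: difference)
  finally show ?thesis unfolding y_def .
qed


lemma smoothed_error_estimate:
  assumes n: "n \<ge> 1" and \<delta>: "\<delta> \<ge> 0"
    and defect_le: "\<And>s. s \<in> {0..t} \<Longrightarrow> norm (defect n (U s z)) \<le> \<delta>"
    and quotient_defect_le: "\<And>s. s \<in> {0..t} \<Longrightarrow> norm (quotient_defect n (U s z)) \<le> \<delta>"
  shows "norm (R n (bl_pow (P n) n z - U t z)) \<le> t * (M * exp (W * t)) * (1 + M) * \<delta>"
proof -
  have propagated: "norm (bl_pow (P n) (n - 1 - k) (R n (P n (U (real k * step n) z) - U (step n) (U (real k * step n) z))))
      \<le> M * exp (W * t) * (step n * (\<delta> + M * \<delta>))" if k: "k < n" for k
  proof -
    let ?s = "real k * step n"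
    have "?s \<le> real n * step n" using k step_nonneg by (intro mult_right_mono) auto
    also have "\<dots> = t" using n by (simp add: step_def)
    finally have s: "?s \<in> {0..t}" using step_nonneg[of n] by simp
    have "norm (R n (quotient_defect n (U ?s z))) \<le> norm (R n) * norm (quotient_defect n (U ?s z))"
      by (rule norm_blinfun)
    also have "\<dots> \<le> M * \<delta>"
      using resolvent_norm[OF n] quotient_defect_le[OF s] \<delta> M_ge_1 by (intro mult_mono) auto
    finally have "norm (defect n (U ?s z) + R n (quotient_defect n (U ?s z))) \<le> \<delta> + M * \<delta>"
      using defect_le[OF s] norm_triangle_ineq by (smt (verit))
    then have local: "norm (R n (P n (U ?s z) - U (step n) (U ?s z))) \<le> step n * (\<delta> + M * \<delta>)"
      using step_nonneg by (simp add: local_error_identity[OF n] mult_left_mono)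
    let ?local_error = "R n (P n (U ?s z) - U (step n) (U ?s z))"
    have "norm (bl_pow (P n) (n - 1 - k) ?local_error)
        \<le> norm (bl_pow (P n) (n - 1 - k)) * norm ?local_error"
      by (rule norm_blinfun)
    also have "\<dots> \<le> M * exp (W * t) * (step n * (\<delta> + M * \<delta>))"
      using n local M_ge_1 by (intro mult_mono power_bound_horizon) auto
    finally show ?thesis .
  qed
  have "norm (R n (bl_pow (P n) n z - U t z)) \<le> (\<Sum>k<n. M * exp (W * t) * (step n * (\<delta> + M * \<delta>)))"
    unfolding telescoping_identity[OF n] by (intro order_trans[OF norm_sum] sum_mono propagated) auto
  also have "\<dots> = real n * step n * (M * exp (W * t)) * (1 + M) * \<delta>" by (simp add: algebra_simps)
  also have "\<dots> = t * (M * exp (W * t)) * (1 + M) * \<delta>" using n by (simp add: step_def)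
  finally show ?thesis .
qed

lemma smoothed_error_tendsto_domain:
  assumes z: "z \<in> D"
  shows "(\<lambda>n. R n (bl_pow (P n) n z - U t z)) \<longlonglongrightarrow> 0"
proof (rule tendstoI)
  fix e :: real assume e: "e > 0"
  define Q where "Q = t * (M * exp (W * t)) * (1 + M)"
  have Q: "Q > 0" using t_pos M_ge_1 by (simp add: Q_def)
  define \<delta> where "\<delta> = e / (2 * Q)"
  have \<delta>: "\<delta> > 0" using e Q by (simp add: \<delta>_def)
  have "\<forall>\<^sub>F n in sequentially. \<forall>s\<in>{0..t}. norm (defect n (U s z)) < \<delta>"
    by (rule defect_uniform_orbit[OF z \<delta>])
  moreover have "\<forall>\<^sub>F n in sequentially. \<forall>s\<in>{0..t}. norm (quotient_defect n (U s z)) < \<delta>"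
    by (rule quotient_defect_uniform_orbit[OF z \<delta>])
  moreover have "\<forall>\<^sub>F n in sequentially. n \<ge> 1" by (rule eventually_ge_at_top)
  ultimately show "\<forall>\<^sub>F n in sequentially. dist (R n (bl_pow (P n) n z - U t z)) 0 < e"
  proof eventually_elim
    case (elim n)
    then have "norm (R n (bl_pow (P n) n z - U t z)) \<le> Q * \<delta>"
      unfolding Q_def using \<delta> by (intro smoothed_error_estimate) (auto intro: less_imp_le)
    also have "\<dots> < e" using Q e by (simp add: \<delta>_def)
    finally show ?case by simp
  qed
qed

text \<open>By stability and density the smoothed error tends to \<open>0\<close> for every vector.\<close>

lemma smoothed_error_tendsto: "(\<lambda>n. R n (bl_pow (P n) n x - U t x)) \<longlonglongrightarrow> 0"
proof -
  have "(\<lambda>n. (R n o\<^sub>L (bl_pow (P n) n - U t)) x) \<longlonglongrightarrow> 0"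
  proof (rule tendsto_zero_dense[OF _ _ domain_dense])
    fix n :: nat assume n: "n \<ge> 1"
    have "norm (R n o\<^sub>L (bl_pow (P n) n - U t)) \<le> norm (R n) * norm (bl_pow (P n) n - U t)"
      by (rule norm_blinfun_compose)
    also have "\<dots> \<le> M * (M * exp (W * t) + norm (U t))"
      using resolvent_norm[OF n] power_bound_horizon[OF n order_refl] M_ge_1
      by (intro mult_mono order_trans[OF norm_triangle_ineq4] add_mono) auto
    finally show "norm (R n o\<^sub>L (bl_pow (P n) n - U t)) \<le> M * (M * exp (W * t) + norm (U t))" .
  next
    fix z assume "z \<in> D"
    then show "(\<lambda>n. (R n o\<^sub>L (bl_pow (P n) n - U t)) z) \<longlonglongrightarrow> 0"
      using smoothed_error_tendsto_domain by (simp add: blinfun.bilinear_simps)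
  qed
  then show ?thesis by (simp add: blinfun.bilinear_simps)
qed

text \<open>Removing the smoothing on the domain: with \<open>z = (\<mu> - G) w\<close>,
  \<open>P^n w - U(t) w = R (P^n z - U(t) z) - P^n (defect w) + defect (U(t) w)\<close>.\<close>

lemma chernoff_tendsto_domain:
  assumes w: "w \<in> D"
  shows "(\<lambda>n. bl_pow (P n) n w - U t w) \<longlonglongrightarrow> 0"
proof -
  define z where "z = mu *\<^sub>R w - G w"
  define E where "E n = R n (bl_pow (P n) n z - U t z) - bl_pow (P n) n (defect n w) + defect n (U t w)" for n
  have decomposition: "E n = bl_pow (P n) n w - U t w" if n: "n \<ge> 1" for n
  proof -
    have "G (U t w) = U t (G w)" using domain_invariant w t_pos by auto
    then have "R n (U t z) = defect n (U t w) + U t w"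
      unfolding z_def defect_def by (simp add: blinfun.bilinear_simps)
    moreover have "R n (bl_pow (P n) n z) = bl_pow (P n) n (defect n w + w)"
      unfolding z_def defect_def by (simp add: resolvent_commute_power[OF n])
    ultimately show ?thesis unfolding E_def by (simp add: blinfun.bilinear_simps)
  qed
  have propagated_defect: "(\<lambda>n. bl_pow (P n) n (defect n w)) \<longlonglongrightarrow> 0"
  proof (rule Lim_null_comparison)
    show "\<forall>\<^sub>F n in sequentially. norm (bl_pow (P n) n (defect n w)) \<le> M * exp (W * t) * norm (defect n w)"
      using eventually_ge_at_top[of 1]
    proof eventually_elim
      case (elim n)
      show ?case using power_bound_horizon[OF elim order_refl] norm_blinfun[of "bl_pow (P n) n" "defect n w"]
        by (meson mult_right_mono norm_ge_zero order_trans)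
    qed
    show "(\<lambda>n. M * exp (W * t) * norm (defect n w)) \<longlonglongrightarrow> 0"
      using defect_tendsto[OF w] by (intro tendsto_mult_right_zero) (simp add: tendsto_norm_zero_iff)
  qed
  have "(\<lambda>n. defect n (U t w)) \<longlonglongrightarrow> 0" using defect_tendsto domain_invariant w t_pos by auto
  then have "E \<longlonglongrightarrow> 0 - 0 + 0"
    unfolding E_def by (intro tendsto_intros smoothed_error_tendsto propagated_defect)
  moreover have "\<forall>\<^sub>F n in sequentially. E n = bl_pow (P n) n w - U t w"
    using eventually_ge_at_top[of 1] by eventually_elim (rule decomposition)
  ultimately show ?thesis by (simp add: Lim_transform_eventually)
qed

text \<open>Chernoff's product formula: by stability the convergence extends from the
  dense domain to all vectors.\<close>

lemma chernoff_product_formula: "(\<lambda>n. bl_pow (F (t / real n)) n x) \<longlonglongrightarrow> U t x"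
proof -
  have "(\<lambda>n. (bl_pow (P n) n - U t) x) \<longlonglongrightarrow> 0"
  proof (rule tendsto_zero_dense[OF _ _ domain_dense])
    fix n :: nat assume n: "n \<ge> 1"
    show "norm (bl_pow (P n) n - U t) \<le> M * exp (W * t) + norm (U t)"
      using power_bound_horizon[OF n order_refl] by (intro order_trans[OF norm_triangle_ineq4] add_mono) auto
  next
    fix z assume "z \<in> D"
    then show "(\<lambda>n. (bl_pow (P n) n - U t) z) \<longlonglongrightarrow> 0"
      using chernoff_tendsto_domain by (simp add: blinfun.bilinear_simps)
  qed
  then show ?thesis by (simp add: P_def step_def blinfun.bilinear_simps LIM_zero_iff)
qed

end

subsection \<open>The weighted splitting\<close>

lemma graph_closure_extends:
  assumes "op_graph DC C = closure (op_graph D G)" and "y \<in> D"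
  shows "C y = G y"
proof -
  have "(y, G y) \<in> op_graph D G" using assms(2) by (auto simp: op_graph_def)
  then have "(y, G y) \<in> op_graph DC C" using assms(1) closure_subset by blast
  then show ?thesis by (auto simp: op_graph_def)
qed

lemma graph_closure_core:
  fixes C G :: "'a::metric_space \<Rightarrow> 'b::metric_space"
  assumes closure: "op_graph DC C = closure (op_graph D G)" and z: "z \<in> DC"
  shows "\<exists>zs. (\<forall>j. zs j \<in> D) \<and> zs \<longlonglongrightarrow> z \<and> (\<lambda>j. C (zs j)) \<longlonglongrightarrow> C z"
proof -
  have "(z, C z) \<in> closure (op_graph D G)"
    using closure z by (auto simp: op_graph_def)
  then obtain p where p: "\<forall>j. p j \<in> op_graph D G" "p \<longlonglongrightarrow> (z, C z)"
    unfolding closure_sequential by blast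
  have in_D: "fst (p j) \<in> D" and on_graph: "snd (p j) = C (fst (p j))" for j
    using p(1)[rule_format, of j] graph_closure_extends[OF closure] by (auto simp: op_graph_def)
  show ?thesis
  proof (intro exI[of _ "\<lambda>j. fst (p j)"] conjI)
    show "\<forall>j. fst (p j) \<in> D" using in_D by auto
    show "(\<lambda>j. fst (p j)) \<longlonglongrightarrow> z" using tendsto_fst[OF p(2)] by simp
    show "(\<lambda>j. C (fst (p j))) \<longlonglongrightarrow> C z" using tendsto_snd[OF p(2)] on_graph by simp
  qed
qed

lemma stability_from_time_levels:
  assumes levels: "\<And>s (n::nat). s \<ge> 0 \<Longrightarrow> n \<ge> 1 \<Longrightarrow>
      norm (bl_pow (F (s / real n)) n) \<le> M * exp (\<omega> * s)"
    and M: "M \<ge> 1" and h: "h \<ge> 0"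
  shows "norm (bl_pow (F h) k) \<le> M * exp (max \<omega> 0 * real k * h)"
proof (cases "k = 0")
  case True
  then show ?thesis using M norm_bl_pow_0_le[of "F h"] by simp
next
  case False
  then have "norm (bl_pow (F h) k) \<le> M * exp (\<omega> * (real k * h))"
    using levels[of "real k * h" k] h by simp
  also have "\<dots> \<le> M * exp (max \<omega> 0 * real k * h)"
    using M h by (intro mult_left_mono) (auto intro!: mult_right_mono simp: mult.assoc)
  finally show ?thesis .
qed

lemma product_derivative:
  assumes "semigroup_generator DA A T" "semigroup_generator DB B S"
    and "z \<in> DA" "z \<in> DB"
  shows "((\<lambda>h. (1/h) *\<^sub>R (S h (T h z) - z)) \<longlongrightarrow> A z + B z) (at_right 0)"
proof -
  have "((\<lambda>h. S h ((1/h) *\<^sub>R (T h z - z)) + (1/h) *\<^sub>R (S h z - z)) \<longlongrightarrow> A z + B z) (at_right 0)"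
    using assms by (intro tendsto_intros semigroup_generator.apply_tendsto_at_0
        semigroup_generator.generator_limit)
  then show ?thesis by (simp add: blinfun.bilinear_simps algebra_simps)
qed

lemma weighted_splitting_derivative:
  assumes "semigroup_generator DA A T" "semigroup_generator DB B S"
    and z: "z \<in> DA \<inter> DB"
  shows "((\<lambda>h. (1/h) *\<^sub>R ((\<Theta> *\<^sub>R (S h o\<^sub>L T h) + (1 - \<Theta>) *\<^sub>R (T h o\<^sub>L S h)) z - z))
      \<longlongrightarrow> A z + B z) (at_right 0)"
proof -
  have "((\<lambda>h. \<Theta> *\<^sub>R ((1/h) *\<^sub>R (S h (T h z) - z)) + (1 - \<Theta>) *\<^sub>R ((1/h) *\<^sub>R (T h (S h z) - z)))
      \<longlongrightarrow> \<Theta> *\<^sub>R (A z + B z) + (1 - \<Theta>) *\<^sub>R (B z + A z)) (at_right 0)"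
    using assms by (intro tendsto_intros product_derivative) auto
  moreover have "\<Theta> *\<^sub>R (A z + B z) + (1 - \<Theta>) *\<^sub>R (B z + A z) = A z + B z"
    by (simp add: algebra_simps)
  moreover have "(1/h) *\<^sub>R ((\<Theta> *\<^sub>R (S h o\<^sub>L T h) + (1 - \<Theta>) *\<^sub>R (T h o\<^sub>L S h)) z - z)
      = \<Theta> *\<^sub>R ((1/h) *\<^sub>R (S h (T h z) - z)) + (1 - \<Theta>) *\<^sub>R ((1/h) *\<^sub>R (T h (S h z) - z))" for h
  proof -
    have "(\<Theta> *\<^sub>R (S h o\<^sub>L T h) + (1 - \<Theta>) *\<^sub>R (T h o\<^sub>L S h)) z - z
        = \<Theta> *\<^sub>R (S h (T h z) - z) + (1 - \<Theta>) *\<^sub>R (T h (S h z) - z)"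
      by (simp add: blinfun.bilinear_simps algebra_simps)
    then show ?thesis by (simp only: scaleR_add_right scaleR_scaleR mult.commute)
  qed
  ultimately show ?thesis by simp
qed

theorem mainTheorem1:
  fixes DA DB DC :: "'a::banach set"
    and A B C :: "'a \<Rightarrow> 'a"
    and T S U :: "real \<Rightarrow> ('a \<Rightarrow>\<^sub>L 'a)"
    and \<Theta> M4 \<omega>4 t :: real
  assumes A_cl: "closed_operator DA A" and A_dense: "densely_defined DA"
    and B_cl: "closed_operator DB B" and B_dense: "densely_defined DB"
    and A_gen: "generates DA A T"
    and B_gen: "generates DB B S"
    and C_closure: "op_graph DC C = closure (op_graph (DA \<inter> DB) (\<lambda>x. A x + B x))"
    and dom_incl: "DA \<inter> DB \<subseteq> DC"
    and C_gen: "generates DC C U"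
    and Theta: "0 < \<Theta>" "\<Theta> < 1"
    and M4: "M4 \<ge> 1"
    and stab1: "\<And>s (n::nat). s \<ge> 0 \<Longrightarrow> n \<ge> 1 \<Longrightarrow>
       norm (bl_pow (\<Theta> *\<^sub>R (S (s / real n) o\<^sub>L T (s / real n)) + (1 - \<Theta>) *\<^sub>R (T (s / real n) o\<^sub>L S (s / real n))) n)
         \<le> M4 * exp (\<omega>4 * s)"
    and stab2: "\<And>s (n::nat). s \<ge> 0 \<Longrightarrow> n \<ge> 1 \<Longrightarrow>
       norm (bl_pow (\<Theta> *\<^sub>R (T (s / real n) o\<^sub>L S (s / real n)) + (1 - \<Theta>) *\<^sub>R (S (s / real n) o\<^sub>L T (s / real n))) n)
         \<le> M4 * exp (\<omega>4 * s)"
    and t_pos: "t > 0"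
  shows "\<forall>x. (\<lambda>n::nat. norm (bl_pow (\<Theta> *\<^sub>R (S (t / real n) o\<^sub>L T (t / real n))
              + (1 - \<Theta>) *\<^sub>R (T (t / real n) o\<^sub>L S (t / real n))) n x - U t x)) \<longlonglongrightarrow> 0"
proof -
  define F where "F h = \<Theta> *\<^sub>R (S h o\<^sub>L T h) + (1 - \<Theta>) *\<^sub>R (T h o\<^sub>L S h)" for h
  have generators: "semigroup_generator DA A T" "semigroup_generator DB B S"
    "semigroup_generator DC C U"
    using A_gen B_gen C_gen by unfold_locales
  have "chernoff DC C U F M4 (max \<omega>4 0) t (DA \<inter> DB)"
  proof (intro chernoff.intro chernoff_axioms.intro generators(3))
    show "norm (bl_pow (F h) k) \<le> M4 * exp (max \<omega>4 0 * real k * h)" if "h \<ge> 0" for h k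
      using stability_from_time_levels[of F, OF stab1[folded F_def] M4 that] .
    show "\<exists>zs. (\<forall>j. zs j \<in> DA \<inter> DB) \<and> zs \<longlonglongrightarrow> z \<and> (\<lambda>j. C (zs j)) \<longlonglongrightarrow> C z" if "z \<in> DC" for z
      using graph_closure_core[OF C_closure that] .
    show "((\<lambda>h. (1 / h) *\<^sub>R (F h z - z)) \<longlongrightarrow> C z) (at_right 0)" if "z \<in> DA \<inter> DB" for z
      using weighted_splitting_derivative[OF generators(1,2) that]
        graph_closure_extends[OF C_closure that] by (simp add: F_def)
  qed (use M4 t_pos in auto)
  then have "(\<lambda>n. bl_pow (F (t / real n)) n x) \<longlonglongrightarrow> U t x" for x
    by (rule chernoff.chernoff_product_formula)
  then show ?thesis by (simp add: F_def LIM_zero_iff tendsto_norm_zero_iff)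
qed

end
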